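(* Let $\Omega$ be an infinite set, $A$ a partition of $\Omega$, $S=\mathrm{Sym}(\Omega)$, $G=S_{(A)}$, and $\kappa$ an infinite regular cardinal with $\kappa\le|\Omega|$. Then: (a) if some member of $A$ has cardinality $\ge\kappa$, there is no $\kappa$-uncrowded generalized metric on $\Omega$ with respect to which all members of $G$ are bounded; (b) if all members of $A$ have cardinality $<\kappa$ but there is no common bound $\lambda<\kappa$ for these cardinalities, then there is a $\kappa$-uncrowded generalized metric on $\Omega$ with respect to which all elements of $G$ are bounded, but no uniformly $\kappa$-uncrowded generalized metric with this property; (c) if all members of $A$ have cardinality $\le\lambda$ for some $\lambda<\kappa$, then there is a uniformly $\kappa$-uncrowded generalized metric with respect to which all elements of $G$ are bounded. Consequently, for partitions $A,B$ of $\Omega$ falling under distinct cases among (a), (b), (c), $S_{(A)}\not\approx_\kappa S_{(B)}$; more precisely, if $A$ falls under a later case than $B$, then $S_{(B)}\not\preccurlyeq_\kappa S_{(A)}$.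
   Context: $\mathrm{Sym}(\Omega)$ is the group of all permutations of $\Omega$, acting on the right. For a partition $A$ of $\Omega$ (a set of disjoint nonempty subsets with union $\Omega$), $S_{(A)}=\{f\in S:\Sigma f=\Sigma\ \forall\Sigma\in A\}$. Let $P=\{r\in\mathbb R:r\ge0\}\cup\{\infty\}$. A generalized metric on $\Omega$ is $d:\Omega\times\Omega\to P$ satisfying the usual metric axioms. $B_d(\alpha,r)=\{\beta:d(\alpha,\beta)<r\}$. $d$ is $\kappa$-uncrowded if $|B_d(\alpha,r)|<\kappa$ for all $\alpha$ and all $r<\infty$; uniformly $\kappa$-uncrowded if for every $r<\infty$ there is $\lambda<\kappa$ with $|B_d(\alpha,r)|\le\lambda$ for all $\alpha$. For $g\in S$, $\|g\|_d=\sup_\alpha d(\alpha,\alpha g)$; $g$ is bounded if $\|g\|_d<\infty$. For subgroups $G_1,G_2\le S$, $G_1\preccurlyeq_\kappa G_2$ means there is $U\subseteq S$, $|U|<\kappa$, with $G_1\le\langle G_2\cup U\rangle$; $G_1\approx_\kappa G_2$ means both directions hold. *)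

theory Defs
  imports Complex_Main "HOL-Library.Extended_Nonnegative_Real" "HOL-Library.Disjoint_Sets"
begin

unbundle cardinal_syntax

text \<open>Omega is the universe of the type 'a.
  Cardinals are represented as cardinal-order relations (BNF cardinals of Main);
  |X| is the cardinal of the set X, <o and \<le>o compare cardinals.\<close>

definition Sym :: "('a \<Rightarrow> 'a) set" where
  "Sym = {f. bij f}"

definition stab :: "'a set set \<Rightarrow> ('a \<Rightarrow> 'a) set" where
  "stab A = {f \<in> Sym. \<forall>X\<in>A. f ` X = X}"

inductive_set gen_perm :: "('a \<Rightarrow> 'a) set \<Rightarrow> ('a \<Rightarrow> 'a) set" for X where
  gen_id: "id \<in> gen_perm X"
| gen_base: "f \<in> X \<Longrightarrow> f \<in> gen_perm X"
| gen_comp: "f \<in> gen_perm X \<Longrightarrow> g \<in> gen_perm X \<Longrightarrow> f \<circ> g \<in> gen_perm X"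
| gen_inv: "f \<in> gen_perm X \<Longrightarrow> inv f \<in> gen_perm X"

definition gen_metric :: "('a \<Rightarrow> 'a \<Rightarrow> ennreal) \<Rightarrow> bool" where
  "gen_metric d \<longleftrightarrow> (\<forall>x y. d x y = 0 \<longleftrightarrow> x = y) \<and> (\<forall>x y. d x y = d y x)
     \<and> (\<forall>x y z. d x z \<le> d x y + d y z)"

definition ball_d :: "('a \<Rightarrow> 'a \<Rightarrow> ennreal) \<Rightarrow> 'a \<Rightarrow> ennreal \<Rightarrow> 'a set" where
  "ball_d d x r = {y. d x y < r}"

definition uncrowded :: "'b rel \<Rightarrow> ('a \<Rightarrow> 'a \<Rightarrow> ennreal) \<Rightarrow> bool" where
  "uncrowded k d \<longleftrightarrow> (\<forall>x r. r < \<infinity> \<longrightarrow> |ball_d d x r| <o k)"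

text \<open>cardinals \<lambda> < \<kappa> \<le> |Omega| are represented as |L| for L a set of type 'a\<close>
definition unif_uncrowded :: "'b rel \<Rightarrow> ('a \<Rightarrow> 'a \<Rightarrow> ennreal) \<Rightarrow> bool" where
  "unif_uncrowded k d \<longleftrightarrow>
     (\<forall>r. r < \<infinity> \<longrightarrow> (\<exists>L::'a set. |L| <o k \<and> (\<forall>x. |ball_d d x r| \<le>o card_of L)))"

definition norm_d :: "('a \<Rightarrow> 'a \<Rightarrow> ennreal) \<Rightarrow> ('a \<Rightarrow> 'a) \<Rightarrow> ennreal" where
  "norm_d d g = (SUP x. d x (g x))"

definition bounded_perm :: "('a \<Rightarrow> 'a \<Rightarrow> ennreal) \<Rightarrow> ('a \<Rightarrow> 'a) \<Rightarrow> bool" where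
  "bounded_perm d g \<longleftrightarrow> norm_d d g < \<infinity>"

definition preceq_k :: "'b rel \<Rightarrow> ('a \<Rightarrow> 'a) set \<Rightarrow> ('a \<Rightarrow> 'a) set \<Rightarrow> bool" where
  "preceq_k k G1 G2 \<longleftrightarrow> (\<exists>U. U \<subseteq> Sym \<and> |U| <o k \<and> G1 \<subseteq> gen_perm (G2 \<union> U))"

definition approx_k :: "'b rel \<Rightarrow> ('a \<Rightarrow> 'a) set \<Rightarrow> ('a \<Rightarrow> 'a) set \<Rightarrow> bool" where
  "approx_k k G1 G2 \<longleftrightarrow> preceq_k k G1 G2 \<and> preceq_k k G2 G1"

definition case_a :: "'b rel \<Rightarrow> 'a set set \<Rightarrow> bool" where
  "case_a k A \<longleftrightarrow> (\<exists>X\<in>A. k \<le>o card_of X)"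

definition case_b :: "'b rel \<Rightarrow> 'a set set \<Rightarrow> bool" where
  "case_b k A \<longleftrightarrow> (\<forall>X\<in>A. |X| <o k) \<and>
     \<not> (\<exists>L::'a set. |L| <o k \<and> (\<forall>X\<in>A. |X| \<le>o card_of L))"

definition case_c :: "'b rel \<Rightarrow> 'a set set \<Rightarrow> bool" where
  "case_c k A \<longleftrightarrow> (\<exists>L::'a set. |L| <o k \<and> (\<forall>X\<in>A. |X| \<le>o card_of L))"

definition case_no :: "'b rel \<Rightarrow> 'a set set \<Rightarrow> nat" where
  "case_no k A = (if case_a k A then 1 else if case_b k A then 2 else 3)"

end

theory Submission
  imports Defs
begin

text \<open>
  Call two points adjacent if they lie in a common block of A or if some u \<in> U maps one to the
  other, and let d be the graph distance. Every element of the group generated by S_(A) and U moves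
  each point a bounded distance. Since \<kappa> is regular, a d-ball, being contained in an iterated
  neighbourhood, has fewer than \<kappa> points when the blocks and U are smaller than \<kappa>, and its size
  is bounded uniformly below \<kappa> when the block sizes are bounded by some \<lambda> < \<kappa>.

  Conversely, if d is \<kappa>-uncrowded and some block has at least \<kappa> points, or d is uniformly
  \<kappa>-uncrowded and the block sizes have no bound below \<kappa>, then off any finite set there are two
  points of one block at any prescribed distance. Swapping infinitely many disjoint such pairs at
  distances 0, 1, 2, ... gives an unbounded element of S_(A).

  If S_(B) lies in the group generated by S_(A) and a set U with |U| < \<kappa>, the distance built from
  A and U bounds S_(B); when A falls under a later case than B, this contradicts the negative half
  of the case of B.
\<close>

lemma finite_card_of_ordLess:
  assumes "Card_order k" "infinite (Field k)" "finite A"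
  shows "|A| <o k"
  by (rule finite_ordLess_infinite[OF card_of_Well_order card_order_on_well_order_on[OF assms(1)]])
    (simp_all add: Field_card_of assms)

lemma card_of_Times_ordLess_regularCard:
  assumes "Card_order k" "infinite (Field k)" "regularCard k" "|M| <o k" "|K| <o k"
  shows "|M \<times> K| <o k"
proof -
  have "M \<times> K = (\<Union>m\<in>M. Pair m ` K)" by auto
  moreover have "\<forall>m\<in>M. |Pair m ` K| <o k"
    using card_of_image assms(5) ordLeq_ordLess_trans by blast
  ultimately show ?thesis
    using card_of_UNION_ordLess_infinite_Field_regularCard[OF assms(3) _ assms(4)] assms(1,2)
    unfolding cinfinite_def by auto
qed

lemma card_of_copy_into_type:
  fixes X :: "'b set"
  assumes "|X| <o k" "k \<le>o |UNIV :: 'c set|"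
  shows "\<exists>M :: 'c set. |M| <o k \<and> |X| \<le>o |M|"
proof -
  obtain f :: "'b \<Rightarrow> 'c" where "inj_on f X"
    using card_of_ordLeq[of X "UNIV :: 'c set"] ordLess_imp_ordLeq ordLeq_transitive assms by blast
  then have "|X| \<le>o |f ` X|" using card_of_ordLeq[of X "f ` X"] by blast
  moreover have "|f ` X| <o k" using card_of_image assms(1) by (rule ordLeq_ordLess_trans)
  ultimately show ?thesis by blast
qed

lemma partition_on_block_eq:
  assumes "partition_on S A" "X \<in> A" "Y \<in> A" "x \<in> X" "x \<in> Y"
  shows "X = Y"
  using disjointD[OF partition_onD2[OF assms(1)] assms(2,3)] assms(4,5) by blast

lemma gen_perm_subset_Sym:
  assumes "X \<subseteq> Sym"
  shows "gen_perm X \<subseteq> Sym"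
proof
  fix g assume "g \<in> gen_perm X"
  then show "g \<in> Sym"
    by (induction g rule: gen_perm.induct)
      (use assms in \<open>auto simp: Sym_def bij_imp_bij_inv
        intro: bij_comp[unfolded comp_def] bij_id[unfolded id_def]\<close>)
qed

lemma relpow_sym:
  assumes "sym R" "(x, y) \<in> R ^^ n"
  shows "(y, x) \<in> R ^^ n"
  using assms(2)
proof (induction n arbitrary: x y)
  case (Suc n)
  from Suc.prems obtain z where "(x, z) \<in> R ^^ n" "(z, y) \<in> R" by (rule relpow_Suc_E)
  then show ?case using Suc.IH relpow_Suc_I2 symD[OF assms(1)] by metis
qed simp

lemma relpow_refl_mono:
  assumes "refl R" "m \<le> n" "(x, y) \<in> R ^^ m"
  shows "(x, y) \<in> R ^^ n"
  using assms(2)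
proof (induction n rule: dec_induct)
  case (step n)
  then show ?case using relpow_Suc_I reflD[OF assms(1)] by metis
qed (use assms(3) in simp)

definition path_dist :: "'a rel \<Rightarrow> 'a \<Rightarrow> 'a \<Rightarrow> ennreal" where
  "path_dist R x y = (if \<exists>n. (x, y) \<in> R ^^ n then of_nat (LEAST n. (x, y) \<in> R ^^ n) else \<infinity>)"

lemma path_dist_le: "(x, y) \<in> R ^^ n \<Longrightarrow> path_dist R x y \<le> of_nat n"
  unfolding path_dist_def by (auto intro: Least_le)

lemma path_dist_attained:
  assumes "path_dist R x y < \<infinity>"
  obtains n where "(x, y) \<in> R ^^ n" "path_dist R x y = of_nat n"
proof -
  have "\<exists>n. (x, y) \<in> R ^^ n" using assms unfolding path_dist_def by (auto split: if_splits)
  then show ?thesis using that LeastI_ex[of "\<lambda>n. (x, y) \<in> R ^^ n"] unfolding path_dist_def by auto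
qed

lemma path_dist_less_imp_relpow:
  assumes "refl R" "path_dist R x y < of_nat N"
  shows "(x, y) \<in> R ^^ N"
proof -
  have "path_dist R x y < \<infinity>"
    using assms(2) of_nat_less_top less_trans unfolding infinity_ennreal_def by metis
  then obtain n where "(x, y) \<in> R ^^ n" "path_dist R x y = of_nat n" by (rule path_dist_attained)
  with assms show ?thesis using relpow_refl_mono[of R n N] by simp
qed

lemma gen_metric_path_dist:
  assumes "refl R" "sym R"
  shows "gen_metric (path_dist R)"
  unfolding gen_metric_def
proof (intro conjI allI)
  fix x y z
  show "path_dist R x y = 0 \<longleftrightarrow> x = y"
  proof
    assume "path_dist R x y = 0"
    then obtain n where "(x, y) \<in> R ^^ n" "of_nat n = (0 :: ennreal)"
      by (metis path_dist_attained ennreal_zero_less_top infinity_ennreal_def)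
    then show "x = y" by simp
  qed (use path_dist_le[where R = R and n = 0] in simp)
  have "(x, y) \<in> R ^^ n \<longleftrightarrow> (y, x) \<in> R ^^ n" for n
    using relpow_sym[OF assms(2)] by blast
  then show "path_dist R x y = path_dist R y x" unfolding path_dist_def by simp
  show "path_dist R x z \<le> path_dist R x y + path_dist R y z"
  proof (cases "path_dist R x y < \<infinity> \<and> path_dist R y z < \<infinity>")
    case True
    then obtain m n where "(x, y) \<in> R ^^ m" "path_dist R x y = of_nat m"
      and "(y, z) \<in> R ^^ n" "path_dist R y z = of_nat n"
      by (metis path_dist_attained)
    then show ?thesis using path_dist_le[OF relpow_trans] by (metis of_nat_add)
  qed (auto simp: not_less top_unique)
qed

lemma bounded_perm_path_dist:
  assumes "\<forall>x. (x, g x) \<in> R ^^ N"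
  shows "bounded_perm (path_dist R) g"
proof -
  have "norm_d (path_dist R) g \<le> of_nat N"
    unfolding norm_d_def by (rule SUP_least) (simp add: path_dist_le assms)
  then show ?thesis
    unfolding bounded_perm_def infinity_ennreal_def using of_nat_less_top le_less_trans by blast
qed

lemma gen_perm_displacement_bounded:
  assumes "sym R" "X \<subseteq> Sym" "\<forall>f\<in>X. \<exists>N. \<forall>x. (x, f x) \<in> R ^^ N" "g \<in> gen_perm X"
  shows "\<exists>N. \<forall>x. (x, g x) \<in> R ^^ N"
  using assms(4)
proof (induction g rule: gen_perm.induct)
  case gen_id
  show ?case by (metis id_apply relpow_0_I)
next
  case (gen_base f)
  then show ?case using assms(3) by blast
next
  case (gen_comp f g)
  then obtain M N where "\<forall>x. (x, f x) \<in> R ^^ M" "\<forall>x. (x, g x) \<in> R ^^ N" by blast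
  then have "\<forall>x. (x, (f \<circ> g) x) \<in> R ^^ (N + M)" using relpow_trans by fastforce
  then show ?case by blast
next
  case (gen_inv f)
  then obtain N where N: "\<forall>x. (x, f x) \<in> R ^^ N" by blast
  have "surj f" using gen_inv.hyps gen_perm_subset_Sym[OF assms(2)] by (auto simp: Sym_def bij_def)
  then have "\<forall>x. (x, inv f x) \<in> R ^^ N"
    using relpow_sym[OF assms(1) N[rule_format, of "inv f _"]] by (simp add: surj_f_inv_f)
  then show ?case by blast
qed

lemma ball_path_dist_subset_relpow:
  assumes "refl R" "r < \<infinity>"
  obtains N where "\<And>x. ball_d (path_dist R) x r \<subseteq> (R ^^ N) `` {x}"
proof -
  obtain N where "r < of_nat N"
    using ennreal_Ex_less_of_nat assms(2) unfolding infinity_ennreal_def by blast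
  then have "ball_d (path_dist R) x r \<subseteq> (R ^^ N) `` {x}" for x
    unfolding ball_d_def using path_dist_less_imp_relpow[OF assms(1)] less_trans by blast
  then show ?thesis using that by blast
qed

lemma relpow_Suc_Image:
  fixes R :: "'a rel"
  shows "(R ^^ Suc n) `` {x} = (\<Union>y \<in> (R ^^ n) `` {x}. R `` {y})"
  by auto

lemma card_of_relpow_Image_ordLess:
  fixes R :: "'a rel"
  assumes "Card_order k" "infinite (Field k)" "regularCard k" "\<forall>y. |R `` {y}| <o k"
  shows "|(R ^^ n) `` {x}| <o k"
proof (induction n)
  case 0
  have "finite ((R ^^ 0) `` {x})" by simp
  then show ?case by (rule finite_card_of_ordLess[OF assms(1,2)])
next
  case (Suc n)
  have "Cinfinite k" using assms(1,2) unfolding cinfinite_def by blast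
  then show ?case unfolding relpow_Suc_Image
    by (rule card_of_UNION_ordLess_infinite_Field_regularCard[OF assms(3) _ Suc.IH])
      (use assms(4) in blast)
qed

lemma card_of_relpow_Image_uniform:
  fixes R :: "'a rel" and K :: "'b set"
  assumes "Card_order k" "infinite (Field k)" "regularCard k" "k \<le>o |UNIV :: 'c set|"
    and "|K| <o k" "\<forall>y. |R `` {y}| \<le>o |K|"
  shows "\<exists>M :: 'c set. |M| <o k \<and> (\<forall>x. |(R ^^ n) `` {x}| \<le>o card_of M)"
proof (induction n)
  case 0
  have "|{undefined :: 'c}| <o k" by (rule finite_card_of_ordLess[OF assms(1,2)]) simp
  then show ?case by (auto simp: card_of_singl_ordLeq)
next
  case (Suc n)
  then obtain M :: "'c set" where M: "|M| <o k" "\<forall>x. |(R ^^ n) `` {x}| \<le>o |M|" by blast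
  obtain M' :: "'c set" where M': "|M'| <o k" "|M \<times> K| \<le>o |M'|"
    using card_of_copy_into_type[OF card_of_Times_ordLess_regularCard[OF assms(1-3) M(1) assms(5)]]
      assms(4) by blast
  have "|(R ^^ Suc n) `` {x}| \<le>o |M'|" for x
  proof -
    have "|(R ^^ Suc n) `` {x}| \<le>o |SIGMA y : (R ^^ n) `` {x}. R `` {y}|"
      unfolding relpow_Suc_Image by (rule card_of_UNION_Sigma)
    moreover have "|SIGMA y : (R ^^ n) `` {x}. R `` {y}| \<le>o |(R ^^ n) `` {x} \<times> K|"
      by (rule card_of_Sigma_mono1) (use assms(6) in blast)
    moreover have "|(R ^^ n) `` {x} \<times> K| \<le>o |M \<times> K|"
      by (rule card_of_Times_mono1) (use M(2) in blast)
    ultimately show ?thesis using M'(2) ordLeq_transitive by metis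
  qed
  then show ?case using M'(1) by blast
qed

lemma uncrowded_path_dist:
  assumes "refl R" "Card_order k" "infinite (Field k)" "regularCard k" "\<forall>y. |R `` {y}| <o k"
  shows "uncrowded k (path_dist R)"
  unfolding uncrowded_def
proof (intro allI impI)
  fix x and r :: ennreal assume "r < \<infinity>"
  then obtain N where "ball_d (path_dist R) x r \<subseteq> (R ^^ N) `` {x}"
    using ball_path_dist_subset_relpow[OF assms(1)] by metis
  then show "|ball_d (path_dist R) x r| <o k"
    using card_of_mono1 card_of_relpow_Image_ordLess[OF assms(2-5)] ordLeq_ordLess_trans by blast
qed

lemma unif_uncrowded_path_dist:
  fixes R :: "'a rel"
  assumes "refl R" "Card_order k" "infinite (Field k)" "regularCard k" "k \<le>o |UNIV :: 'a set|"
    and "|K| <o k" "\<forall>y. |R `` {y}| \<le>o |K|"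
  shows "unif_uncrowded k (path_dist R)"
  unfolding unif_uncrowded_def
proof (intro allI impI)
  fix r :: ennreal assume "r < \<infinity>"
  then obtain N where N: "\<And>x. ball_d (path_dist R) x r \<subseteq> (R ^^ N) `` {x}"
    using ball_path_dist_subset_relpow[OF assms(1)] by metis
  obtain M :: "'a set" where "|M| <o k" "\<forall>x. |(R ^^ N) `` {x}| \<le>o |M|"
    using card_of_relpow_Image_uniform[OF assms(2-7)] by blast
  then show "\<exists>M :: 'a set. |M| <o k \<and> (\<forall>x. |ball_d (path_dist R) x r| \<le>o card_of M)"
    using card_of_mono1[OF N] ordLeq_transitive by blast
qed

definition block_move_rel :: "'a set set \<Rightarrow> ('a \<Rightarrow> 'a) set \<Rightarrow> 'a rel" where
  "block_move_rel A U = {(x, y). (\<exists>X\<in>A. x \<in> X \<and> y \<in> X) \<or> (\<exists>u\<in>U. y = u x \<or> x = u y)}"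

lemma refl_block_move_rel:
  assumes "partition_on UNIV A"
  shows "refl (block_move_rel A U)"
proof (rule reflI)
  fix x
  obtain X where "X \<in> A" "x \<in> X" using partition_onD1[OF assms] by blast
  then show "(x, x) \<in> block_move_rel A U" unfolding block_move_rel_def by blast
qed

lemma sym_block_move_rel: "sym (block_move_rel A U)"
  unfolding block_move_rel_def by (auto intro: symI)

lemma Image_block_move_rel_subset:
  assumes "partition_on UNIV A" "U \<subseteq> Sym" "X \<in> A" "x \<in> X"
  shows "block_move_rel A U `` {x} \<subseteq> X \<union> ((\<lambda>u. u x) ` U \<union> (\<lambda>u. inv u x) ` U)"
proof
  fix y assume "y \<in> block_move_rel A U `` {x}"
  then consider Y where "Y \<in> A" "x \<in> Y" "y \<in> Y" | u where "u \<in> U" "y = u x \<or> x = u y"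
    unfolding block_move_rel_def by blast
  then show "y \<in> X \<union> ((\<lambda>u. u x) ` U \<union> (\<lambda>u. inv u x) ` U)"
  proof cases
    case 1
    then show ?thesis using partition_on_block_eq[OF assms(1,3)] assms(4) by blast
  next
    case 2
    then have "inj u" using assms(2) by (auto simp: Sym_def bij_is_inj)
    then have "y = u x \<or> y = inv u x" using 2(2) by auto
    then show ?thesis using 2(1) by blast
  qed
qed

lemma bounded_perm_gen_perm_block_move_rel:
  assumes "partition_on UNIV A" "U \<subseteq> Sym" "g \<in> gen_perm (stab A \<union> U)"
  shows "bounded_perm (path_dist (block_move_rel A U)) g"
proof -
  have "(x, f x) \<in> block_move_rel A U ^^ 1" if "f \<in> stab A \<union> U" for f x
  proof (cases "f \<in> U")
    case False
    obtain X where "X \<in> A" "x \<in> X" using partition_onD1[OF assms(1)] by blast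
    then show ?thesis using False that unfolding stab_def block_move_rel_def by auto
  qed (auto simp: block_move_rel_def)
  moreover have "stab A \<union> U \<subseteq> Sym" using assms(2) unfolding stab_def by auto
  ultimately show ?thesis
    using gen_perm_displacement_bounded[OF sym_block_move_rel _ _ assms(3)] bounded_perm_path_dist
    by meson
qed

lemma uncrowded_path_dist_block_move_rel:
  assumes "partition_on UNIV A" "U \<subseteq> Sym" "Card_order k" "infinite (Field k)" "regularCard k"
    and "\<forall>X\<in>A. |X| <o k" "|U| <o k"
  shows "uncrowded k (path_dist (block_move_rel A U))"
proof (rule uncrowded_path_dist[OF refl_block_move_rel[OF assms(1)] assms(3-5)], intro allI)
  fix x
  obtain X where X: "X \<in> A" "x \<in> X" using partition_onD1[OF assms(1)] by blast
  have "|(\<lambda>u. u x) ` U| <o k" "|(\<lambda>u. inv u x) ` U| <o k"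
    using card_of_image assms(7) ordLeq_ordLess_trans by blast+
  then have "|X \<union> ((\<lambda>u. u x) ` U \<union> (\<lambda>u. inv u x) ` U)| <o k"
    using card_of_Un_ordLess_infinite_Field[OF assms(4,3)] assms(6) X(1) by metis
  then show "|block_move_rel A U `` {x}| <o k"
    using card_of_mono1[OF Image_block_move_rel_subset[OF assms(1,2) X]] ordLeq_ordLess_trans
    by blast
qed

lemma unif_uncrowded_path_dist_block_move_rel:
  fixes A :: "'a set set" and L :: "'b set"
  assumes "partition_on UNIV A" "U \<subseteq> Sym" "Card_order k" "infinite (Field k)" "regularCard k"
    and "k \<le>o |UNIV :: 'a set|" "\<forall>X\<in>A. |X| \<le>o |L|" "|L| <o k" "|U| <o k"
  shows "unif_uncrowded k (path_dist (block_move_rel A U))"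
proof (rule unif_uncrowded_path_dist[OF refl_block_move_rel[OF assms(1)] assms(3-6)])
  show "|L <+> (U <+> U)| <o k"
    using card_of_Plus_ordLess_infinite_Field[OF assms(4,3)] assms(8,9) by metis
  show "\<forall>x. |block_move_rel A U `` {x}| \<le>o |L <+> (U <+> U)|"
  proof
    fix x
    obtain X where X: "X \<in> A" "x \<in> X" using partition_onD1[OF assms(1)] by blast
    have "|(\<lambda>u. u x) ` U \<union> (\<lambda>u. inv u x) ` U| \<le>o |U <+> U|"
      using card_of_Un_Plus_ordLeq card_of_Plus_mono[OF card_of_image card_of_image]
        ordLeq_transitive by blast
    then have "|X \<union> ((\<lambda>u. u x) ` U \<union> (\<lambda>u. inv u x) ` U)| \<le>o |L <+> (U <+> U)|"
      using card_of_Un_Plus_ordLeq card_of_Plus_mono assms(7) X(1) ordLeq_transitive by metis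
    then show "|block_move_rel A U `` {x}| \<le>o |L <+> (U <+> U)|"
      using card_of_mono1[OF Image_block_move_rel_subset[OF assms(1,2) X]] ordLeq_transitive
      by blast
  qed
qed

lemma disjoint_pair_sequence:
  assumes "\<And>F n. finite F \<Longrightarrow> \<exists>x y. x \<notin> F \<and> y \<notin> F \<and> x \<noteq> y \<and> P n x y"
  obtains a b :: "nat \<Rightarrow> 'a" where "inj a" "inj b" "\<And>i j. a i \<noteq> b j" "\<And>n. P n (a n) (b n)"
proof -
  define Inv where "Inv n = (\<lambda>(F, x, y). finite F \<and> x \<notin> F \<and> y \<notin> F \<and> x \<noteq> y \<and> P n x y)"
    for n :: nat
  define Step :: "'a set \<times> 'a \<times> 'a \<Rightarrow> 'a set \<times> 'a \<times> 'a \<Rightarrow> bool"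
    where "Step = (\<lambda>(F, x, y) (F', _). F' = insert x (insert y F))"
  have "\<exists>s. Inv 0 s" using assms[of "{}" 0] unfolding Inv_def by auto
  moreover have "\<exists>s'. Inv (Suc n) s' \<and> Step s s'" if "Inv n s" for n s
  proof -
    obtain F x y where s: "s = (F, x, y)" by (cases s)
    then have "finite (insert x (insert y F))" using that unfolding Inv_def by simp
    then obtain x' y' where "x' \<notin> insert x (insert y F)" "y' \<notin> insert x (insert y F)"
      "x' \<noteq> y'" "P (Suc n) x' y'"
      using assms by blast
    then show ?thesis
      using \<open>finite (insert x (insert y F))\<close> unfolding Inv_def Step_def s
      by (intro exI[of _ "(insert x (insert y F), x', y')"]) simp
  qed
  ultimately obtain f where f: "\<And>n. Inv n (f n) \<and> Step (f n) (f (Suc n))"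
    using dependent_nat_choice[of Inv "\<lambda>_. Step"] by metis
  define F where "F n = fst (f n)" for n
  define a where "a n = fst (snd (f n))" for n
  define b where "b n = snd (snd (f n))" for n
  have new: "a n \<notin> F n" "b n \<notin> F n" "a n \<noteq> b n" "P n (a n) (b n)"
    and F_Suc: "F (Suc n) = insert (a n) (insert (b n) (F n))" for n
    using f[of n] unfolding Inv_def Step_def F_def a_def b_def by (auto split: prod.splits)
  have mono: "F m \<subseteq> F n" if "m \<le> n" for m n
    by (rule lift_Suc_mono_le[of F, OF _ that]) (simp add: F_Suc subset_insertI2)
  have sep: "{a i, b i} \<inter> {a j, b j} = {}" if "i < j" for i j
  proof -
    have "F (Suc i) \<subseteq> F j" using that by (intro mono) simp
    then have "{a i, b i} \<subseteq> F j" by (simp add: F_Suc)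
    then show ?thesis using new(1,2)[of j] by auto
  qed
  have disj: "{a i, b i} \<inter> {a j, b j} = {}" if "i \<noteq> j" for i j
    using sep[of i j] sep[of j i] that by (cases "i < j") auto
  show ?thesis
  proof
    have "a i \<noteq> a j" "b i \<noteq> b j" if "i \<noteq> j" for i j using disj[OF that] by auto
    then show "inj a" "inj b" by (metis injI)+
    show "a i \<noteq> b j" for i j using disj[of i j] new(3)[of i] by (cases "i = j") auto
  qed (use new(4) in blast)
qed

definition pair_swap :: "(nat \<Rightarrow> 'a) \<Rightarrow> (nat \<Rightarrow> 'a) \<Rightarrow> 'a \<Rightarrow> 'a" where
  "pair_swap a b z = (if z \<in> range a then b (inv a z) else if z \<in> range b then a (inv b z) else z)"

lemma pair_swap_simps:
  assumes "inj a" "inj b" "\<And>i j. a i \<noteq> b j"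
  shows "pair_swap a b (a i) = b i" "pair_swap a b (b i) = a i"
    and "z \<notin> range a \<Longrightarrow> z \<notin> range b \<Longrightarrow> pair_swap a b z = z"
proof -
  have "b i \<notin> range a" using assms(3) by (metis rangeE)
  then show "pair_swap a b (a i) = b i" "pair_swap a b (b i) = a i"
    using assms(1,2) by (simp_all add: pair_swap_def)
qed (simp add: pair_swap_def)

lemma pair_swap_involution:
  assumes "inj a" "inj b" "\<And>i j. a i \<noteq> b j"
  shows "pair_swap a b (pair_swap a b z) = z"
  using pair_swap_simps[OF assms] by (cases "z \<in> range a \<or> z \<in> range b") auto

lemma bij_pair_swap:
  assumes "inj a" "inj b" "\<And>i j. a i \<noteq> b j"
  shows "bij (pair_swap a b)"
  by (rule bij_betw_byWitness[where f' = "pair_swap a b"])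
    (simp_all add: pair_swap_involution[OF assms])

lemma pair_swap_in_stab:
  assumes "partition_on UNIV A" "inj a" "inj b" "\<And>i j. a i \<noteq> b j"
    and "\<And>i. \<exists>X\<in>A. a i \<in> X \<and> b i \<in> X"
  shows "pair_swap a b \<in> stab A"
proof -
  note swap = pair_swap_simps[OF assms(2-4)] and invol = pair_swap_involution[OF assms(2-4)]
  have partner: "a i \<in> X \<longleftrightarrow> b i \<in> X" if "X \<in> A" for X i
    using assms(5)[of i] partition_on_block_eq[OF assms(1) that] by blast
  have maps_to: "pair_swap a b z \<in> X" if "X \<in> A" "z \<in> X" for X z
  proof -
    consider i where "z = a i" | i where "z = b i" | "z \<notin> range a" "z \<notin> range b" by blast
    then show ?thesis using swap partner[OF that(1)] that(2) by cases simp_all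
  qed
  have "pair_swap a b ` X = X" if "X \<in> A" for X
  proof
    show "pair_swap a b ` X \<subseteq> X" using maps_to[OF that] by blast
    show "X \<subseteq> pair_swap a b ` X" using maps_to[OF that] invol by (metis image_eqI subsetI)
  qed
  then show ?thesis using bij_pair_swap[OF assms(2-4)] unfolding stab_def Sym_def by blast
qed

definition far_block_pairs :: "('a \<Rightarrow> 'a \<Rightarrow> ennreal) \<Rightarrow> 'a set set \<Rightarrow> bool" where
  "far_block_pairs d A \<longleftrightarrow> (\<forall>F n. finite F \<longrightarrow>
     (\<exists>x y. x \<notin> F \<and> y \<notin> F \<and> x \<noteq> y \<and> (\<exists>X\<in>A. x \<in> X \<and> y \<in> X) \<and> of_nat n \<le> d x y))"

lemma unbounded_stab_if_far_block_pairs: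
  assumes "partition_on UNIV A" "far_block_pairs d A"
  shows "\<exists>g\<in>stab A. \<not> bounded_perm d g"
proof -
  obtain a b where ab: "inj a" "inj b" "\<And>i j. a i \<noteq> b j"
    and P: "\<And>n. (\<exists>X\<in>A. a n \<in> X \<and> b n \<in> X) \<and> of_nat n \<le> d (a n) (b n)"
    using disjoint_pair_sequence[of "\<lambda>n x y. (\<exists>X\<in>A. x \<in> X \<and> y \<in> X) \<and> of_nat n \<le> d x y"]
      assms(2) unfolding far_block_pairs_def by metis
  have "\<not> bounded_perm d (pair_swap a b)"
  proof
    assume "bounded_perm d (pair_swap a b)"
    then obtain n where n: "norm_d d (pair_swap a b) < of_nat n"
      using ennreal_Ex_less_of_nat unfolding bounded_perm_def infinity_ennreal_def by blast
    have "of_nat n \<le> d (a n) (pair_swap a b (a n))" using P pair_swap_simps(1)[OF ab] by simp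
    also have "\<dots> \<le> norm_d d (pair_swap a b)" unfolding norm_d_def by (rule SUP_upper) simp
    finally show False using n by simp
  qed
  then show ?thesis using pair_swap_in_stab[OF assms(1) ab] P by blast
qed

lemma ex_not_in_small_set:
  assumes "|S| <o k" "k \<le>o |X|"
  shows "\<exists>x\<in>X. x \<notin> S"
  using assms card_of_mono1 not_ordLess_ordLeq ordLeq_ordLess_trans by (metis subsetI)

lemma not_in_ball_Suc:
  assumes "gen_metric d" "y \<notin> ball_d d x (of_nat (Suc n))"
  shows "of_nat n \<le> d x y" "x \<noteq> y"
proof -
  have "\<not> d x y < of_nat (Suc n)" using assms(2) unfolding ball_d_def by blast
  then have far: "of_nat (Suc n) \<le> d x y" by (simp only: not_less)
  have "(of_nat n :: ennreal) \<le> of_nat (Suc n)" by (rule of_nat_mono) simp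
  then show "of_nat n \<le> d x y" using far by (rule order_trans)
  show "x \<noteq> y"
  proof
    assume "x = y"
    then have "d x y = 0" using assms(1) unfolding gen_metric_def by blast
    then show False using far by simp
  qed
qed

lemma far_block_pairs_if_case_a:
  fixes A :: "'a set set"
  assumes "Card_order k" "infinite (Field k)" "case_a k A" "uncrowded k d" "gen_metric d"
  shows "far_block_pairs d A"
  unfolding far_block_pairs_def
proof (intro allI impI)
  fix F :: "'a set" and n :: nat assume "finite F"
  then have F: "|F| <o k" by (rule finite_card_of_ordLess[OF assms(1,2)])
  obtain X where X: "X \<in> A" "k \<le>o |X|" using assms(3) unfolding case_a_def by blast
  obtain x where x: "x \<in> X" "x \<notin> F" using ex_not_in_small_set[OF F X(2)] by blast
  let ?B = "ball_d d x (of_nat (Suc n))"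
  have "|?B| <o k"
    using assms(4) unfolding uncrowded_def by (metis infinity_ennreal_def of_nat_less_top)
  then have "|F \<union> ?B| <o k" by (rule card_of_Un_ordLess_infinite_Field[OF assms(2,1) F])
  then obtain y where "y \<in> X" "y \<notin> F" "y \<notin> ?B" using ex_not_in_small_set[OF _ X(2)] by blast
  then show "\<exists>x y. x \<notin> F \<and> y \<notin> F \<and> x \<noteq> y \<and> (\<exists>X\<in>A. x \<in> X \<and> y \<in> X) \<and> of_nat n \<le> d x y"
    using not_in_ball_Suc[OF assms(5)] x X(1) by blast
qed

lemma far_block_pairs_if_case_b:
  fixes A :: "'a set set"
  assumes "partition_on UNIV A" "Card_order k" "infinite (Field k)" "regularCard k"
    and "case_b k A" "unif_uncrowded k d" "gen_metric d"
  shows "far_block_pairs d A"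
  unfolding far_block_pairs_def
proof (intro allI impI)
  fix F :: "'a set" and n :: nat assume "finite F"
  then have F: "|F| <o k" by (rule finite_card_of_ordLess[OF assms(2,3)])
  have small: "\<forall>X\<in>A. |X| <o k" and unbounded: "\<not> (\<exists>L::'a set. |L| <o k \<and> (\<forall>X\<in>A. |X| \<le>o card_of L))"
    using assms(5) unfolding case_b_def by blast+
  let ?r = "of_nat (Suc n) :: ennreal"
  obtain L :: "'a set" where L: "|L| <o k" "\<forall>x. |ball_d d x ?r| \<le>o |L|"
    using assms(6) unfolding unif_uncrowded_def by (metis infinity_ennreal_def of_nat_less_top)
  let ?U = "\<Union>z\<in>F. \<Union>{X\<in>A. z \<in> X}"
  have block_small: "|\<Union>{X\<in>A. z \<in> X}| <o k" for z
  proof -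
    obtain X where "X \<in> A" "z \<in> X" using partition_onD1[OF assms(1)] by blast
    then have "\<Union>{X\<in>A. z \<in> X} = X" using partition_on_block_eq[OF assms(1)] by blast
    then show ?thesis using small \<open>X \<in> A\<close> by simp
  qed
  have "Cinfinite k" using assms(2,3) unfolding cinfinite_def by blast
  then have "|?U| <o k"
    by (rule card_of_UNION_ordLess_infinite_Field_regularCard[OF assms(4) _ F])
      (use block_small in blast)
  then have "|L \<union> ?U| <o k" by (rule card_of_Un_ordLess_infinite_Field[OF assms(3,2) L(1)])
  then obtain X where X: "X \<in> A" "\<not> |X| \<le>o |L \<union> ?U|" using unbounded by blast
  have "X \<inter> F = {}"
  proof (rule ccontr)
    assume "X \<inter> F \<noteq> {}"
    then have "X \<subseteq> L \<union> ?U" using X(1) by blast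
    then show False using X(2) card_of_mono1 by blast
  qed
  obtain x where x: "x \<in> X" using partition_onD3[OF assms(1)] X(1) by (metis ex_in_conv)
  have "\<not> X \<subseteq> ball_d d x ?r"
  proof
    assume "X \<subseteq> ball_d d x ?r"
    then have "|X| \<le>o |L|" using card_of_mono1 L(2) ordLeq_transitive by blast
    then show False using X(2) card_of_mono1[of L "L \<union> ?U"] ordLeq_transitive by blast
  qed
  then obtain y where "y \<in> X" "y \<notin> ball_d d x ?r" by blast
  then show "\<exists>x y. x \<notin> F \<and> y \<notin> F \<and> x \<noteq> y \<and> (\<exists>X\<in>A. x \<in> X \<and> y \<in> X) \<and> of_nat n \<le> d x y"
    using not_in_ball_Suc[OF assms(7)] x X(1) \<open>X \<inter> F = {}\<close> by blast
qed

lemma gen_metric_path_dist_block_move_rel: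
  "partition_on UNIV A \<Longrightarrow> gen_metric (path_dist (block_move_rel A U))"
  by (rule gen_metric_path_dist[OF refl_block_move_rel sym_block_move_rel])

lemma bounded_perm_stab_block_move_rel:
  "partition_on UNIV A \<Longrightarrow> g \<in> stab A \<Longrightarrow> bounded_perm (path_dist (block_move_rel A {})) g"
  by (rule bounded_perm_gen_perm_block_move_rel) (auto intro: gen_perm.gen_base)

lemma ex_uncrowded_metric_bounding_stab:
  assumes "partition_on UNIV A" "Card_order k" "infinite (Field k)" "regularCard k"
    and "\<forall>X\<in>A. |X| <o k"
  shows "\<exists>d. gen_metric d \<and> uncrowded k d \<and> (\<forall>g\<in>stab A. bounded_perm d g)"
proof -
  have "|{} :: ('a \<Rightarrow> 'a) set| <o k" by (rule finite_card_of_ordLess[OF assms(2,3)]) simp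
  then have "uncrowded k (path_dist (block_move_rel A {}))"
    by (rule uncrowded_path_dist_block_move_rel[OF assms(1) empty_subsetI assms(2-5)])
  then show ?thesis
    using gen_metric_path_dist_block_move_rel[OF assms(1)]
      bounded_perm_stab_block_move_rel[OF assms(1)] by blast
qed

lemma ex_unif_uncrowded_metric_bounding_stab:
  fixes A :: "'a set set"
  assumes "partition_on UNIV A" "Card_order k" "infinite (Field k)" "regularCard k"
    and "k \<le>o |UNIV :: 'a set|" "case_c k A"
  shows "\<exists>d. gen_metric d \<and> unif_uncrowded k d \<and> (\<forall>g\<in>stab A. bounded_perm d g)"
proof -
  obtain L :: "'a set" where L: "|L| <o k" "\<forall>X\<in>A. |X| \<le>o |L|"
    using assms(6) unfolding case_c_def by blast
  have "|{} :: ('a \<Rightarrow> 'a) set| <o k" by (rule finite_card_of_ordLess[OF assms(2,3)]) simp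
  then have "unif_uncrowded k (path_dist (block_move_rel A {}))"
    by (rule unif_uncrowded_path_dist_block_move_rel[OF assms(1) empty_subsetI assms(2-5) L(2,1)])
  then show ?thesis
    using gen_metric_path_dist_block_move_rel[OF assms(1)]
      bounded_perm_stab_block_move_rel[OF assms(1)] by blast
qed

lemma small_blocks_if_not_case_a:
  assumes "Card_order k" "\<not> case_a k A"
  shows "\<forall>X\<in>A. |X| <o k"
  using assms not_ordLeq_iff_ordLess[OF card_of_Well_order card_order_on_well_order_on]
  unfolding case_a_def by blast

lemma not_preceq_if_case_no_less:
  fixes A B :: "'a set set"
  assumes "Card_order k" "infinite (Field k)" "regularCard k" "k \<le>o |UNIV :: 'a set|"
    and "partition_on UNIV A" "partition_on UNIV B" "case_no k B < case_no k A"
  shows "\<not> preceq_k k (stab B) (stab A)"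
proof
  assume "preceq_k k (stab B) (stab A)"
  then obtain U where U: "U \<subseteq> Sym" "|U| <o k" "stab B \<subseteq> gen_perm (stab A \<union> U)"
    unfolding preceq_k_def by blast
  let ?d = "path_dist (block_move_rel A U)"
  have bounded: "\<forall>g\<in>stab B. bounded_perm ?d g"
    using bounded_perm_gen_perm_block_move_rel[OF assms(5) U(1)] U(3) by blast
  have metric: "gen_metric ?d" by (rule gen_metric_path_dist_block_move_rel[OF assms(5)])
  have "\<not> case_a k A" using assms(7) unfolding case_no_def by (auto split: if_splits)
  then have small: "\<forall>X\<in>A. |X| <o k" by (rule small_blocks_if_not_case_a[OF assms(1)])
  show False
  proof (cases "case_a k B")
    case True
    then have "far_block_pairs ?d B"
      using far_block_pairs_if_case_a[OF assms(1,2) _ _ metric]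
        uncrowded_path_dist_block_move_rel[OF assms(5) U(1) assms(1-3) small U(2)] by blast
    then show False using unbounded_stab_if_far_block_pairs[OF assms(6)] bounded by blast
  next
    case False
    then have "case_b k B" "case_c k A"
      using assms(7) small unfolding case_no_def case_b_def case_c_def by (auto split: if_splits)
    then obtain L :: "'a set" where "|L| <o k" "\<forall>X\<in>A. |X| \<le>o |L|" unfolding case_c_def by blast
    then have "far_block_pairs ?d B"
      using far_block_pairs_if_case_b[OF assms(6,1-3) \<open>case_b k B\<close> _ metric]
        unif_uncrowded_path_dist_block_move_rel[OF assms(5) U(1) assms(1-4)] U(2) by blast
    then show False using unbounded_stab_if_far_block_pairs[OF assms(6)] bounded by blast
  qed
qed

theorem theorem3p3:
  fixes k :: "'b rel"
  assumes inf: "infinite (UNIV :: 'a set)"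
    and card: "Card_order k" and kinf: "infinite (Field k)" and reg: "regularCard k"
    and kle: "(k, card_of (UNIV :: 'a set)) \<in> ordLeq"
  shows
    "(\<forall>A::'a set set. partition_on UNIV A \<longrightarrow> case_a k A \<longrightarrow>
        \<not> (\<exists>d. gen_metric d \<and> uncrowded k d \<and> (\<forall>g\<in>stab A. bounded_perm d g)))
     \<and> (\<forall>A::'a set set. partition_on UNIV A \<longrightarrow> case_b k A \<longrightarrow>
        (\<exists>d. gen_metric d \<and> uncrowded k d \<and> (\<forall>g\<in>stab A. bounded_perm d g)) \<and>
        \<not> (\<exists>d. gen_metric d \<and> unif_uncrowded k d \<and> (\<forall>g\<in>stab A. bounded_perm d g)))
     \<and> (\<forall>A::'a set set. partition_on UNIV A \<longrightarrow> case_c k A \<longrightarrow>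
        (\<exists>d. gen_metric d \<and> unif_uncrowded k d \<and> (\<forall>g\<in>stab A. bounded_perm d g)))
     \<and> (\<forall>A B::'a set set. partition_on UNIV A \<longrightarrow> partition_on UNIV B \<longrightarrow>
        case_no k A \<noteq> case_no k B \<longrightarrow> \<not> approx_k k (stab A) (stab B))
     \<and> (\<forall>A B::'a set set. partition_on UNIV A \<longrightarrow> partition_on UNIV B \<longrightarrow>
        case_no k B < case_no k A \<longrightarrow> \<not> preceq_k k (stab B) (stab A))"
proof (intro conjI allI impI)
  fix A :: "'a set set" assume A: "partition_on UNIV A"
  show "\<not> (\<exists>d. gen_metric d \<and> uncrowded k d \<and> (\<forall>g\<in>stab A. bounded_perm d g))" if "case_a k A"
    using unbounded_stab_if_far_block_pairs[OF A] far_block_pairs_if_case_a[OF card kinf that]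
    by blast
  show "\<not> (\<exists>d. gen_metric d \<and> unif_uncrowded k d \<and> (\<forall>g\<in>stab A. bounded_perm d g))" if "case_b k A"
    using unbounded_stab_if_far_block_pairs[OF A] far_block_pairs_if_case_b[OF A card kinf reg that]
    by blast
  show "\<exists>d. gen_metric d \<and> uncrowded k d \<and> (\<forall>g\<in>stab A. bounded_perm d g)" if "case_b k A"
    using ex_uncrowded_metric_bounding_stab[OF A card kinf reg] that unfolding case_b_def by blast
  show "\<exists>d. gen_metric d \<and> unif_uncrowded k d \<and> (\<forall>g\<in>stab A. bounded_perm d g)" if "case_c k A"
    by (rule ex_unif_uncrowded_metric_bounding_stab[OF A card kinf reg kle that])
  fix B :: "'a set set" assume B: "partition_on UNIV B"
  note not_preceq = not_preceq_if_case_no_less[OF card kinf reg kle]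
  show "\<not> preceq_k k (stab B) (stab A)" if "case_no k B < case_no k A"
    by (rule not_preceq[OF A B that])
  show "\<not> approx_k k (stab A) (stab B)" if "case_no k A \<noteq> case_no k B"
    using not_preceq[OF A B] not_preceq[OF B A] that unfolding approx_k_def
    by (meson linorder_neqE_nat)
qed

end
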